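(* Let $p \geq 6$ and $q_1, q_2 \geq 2$ be integers and let $L$ be the Laplacian of the graph $C_{q_1} \oplus K_p \oplus C_{q_2}$. Then the spectrum of $L$ consists of the eigenvalue $p$ with multiplicity $p-3$, two eigenvalues $\lambda_1, \lambda_2 \in (p,p+2]$, and all other eigenvalues lie in the interval $[0,4]$.
   Context: For integers $p \geq 3$, $q_1,q_2 \geq 2$, the graph $C_{q_1} \oplus K_p \oplus C_{q_2}$ has vertex set $\{-q_1-p+2,\ldots,-p\} \cup \{-p+1,\ldots,0\} \cup \{1,\ldots,q_2-1\}$. Its edges are: every pair of distinct vertices in $\{-p+1,\ldots,0\}$, the edges $\{-p,-p+1\}$ and $\{0,1\}$, the edges $\{j,j+1\}$ for $-q_1-p+2 \leq j \leq -p-1$, and the edges $\{j,j+1\}$ for $1 \leq j \leq q_2-2$. The Laplacian $L$ is the matrix with $L_{ii}$ equal to the degree of $i$, $L_{ij}=-1$ if $i\neq j$ are adjacent and $0$ otherwise. *)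

theory Defs
  imports "Jordan_Normal_Form.Char_Poly" "HOL-Library.Multiset"
begin

text \<open>The graph C_q1 (+) K_p (+) C_q2 on the integer vertex set
  {-q1-p+2 .. q2-1}.\<close>

definition ckc_vertices :: "nat \<Rightarrow> nat \<Rightarrow> nat \<Rightarrow> int set" where
  "ckc_vertices p q1 q2 = {- int q1 - int p + 2 .. int q2 - 1}"

definition ckc_adj :: "nat \<Rightarrow> nat \<Rightarrow> nat \<Rightarrow> int \<Rightarrow> int \<Rightarrow> bool" where
  "ckc_adj p q1 q2 u v \<longleftrightarrow>
     u \<in> ckc_vertices p q1 q2 \<and> v \<in> ckc_vertices p q1 q2 \<and> u \<noteq> v \<and>
     ( (u \<in> {- int p + 1 .. 0} \<and> v \<in> {- int p + 1 .. 0})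
     \<or> {u, v} = {- int p, - int p + 1}
     \<or> {u, v} = {0, 1}
     \<or> (\<exists>j. - int q1 - int p + 2 \<le> j \<and> j \<le> - int p - 1 \<and> {u, v} = {j, j + 1})
     \<or> (\<exists>j. 1 \<le> j \<and> j \<le> int q2 - 2 \<and> {u, v} = {j, j + 1}))"

definition ckc_n :: "nat \<Rightarrow> nat \<Rightarrow> nat \<Rightarrow> nat" where
  "ckc_n p q1 q2 = p + q1 + q2 - 2"

definition ckc_vertex :: "nat \<Rightarrow> nat \<Rightarrow> nat \<Rightarrow> nat \<Rightarrow> int" where
  "ckc_vertex p q1 q2 i = int i - int q1 - int p + 2"

definition ckc_degree :: "nat \<Rightarrow> nat \<Rightarrow> nat \<Rightarrow> int \<Rightarrow> nat" where
  "ckc_degree p q1 q2 u = card {v \<in> ckc_vertices p q1 q2. ckc_adj p q1 q2 u v}"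

definition ckc_laplacian :: "nat \<Rightarrow> nat \<Rightarrow> nat \<Rightarrow> real mat" where
  "ckc_laplacian p q1 q2 = mat (ckc_n p q1 q2) (ckc_n p q1 q2) (\<lambda>(i, j).
     let u = ckc_vertex p q1 q2 i; v = ckc_vertex p q1 q2 j in
     if i = j then real (ckc_degree p q1 q2 u)
     else if ckc_adj p q1 q2 u v then -1 else 0)"

end

theory Submission
  imports Defs "Jordan_Normal_Form.Schur_Decomposition"
begin

text \<open>
  Number the vertices 0, ..., n-1 along the underlying path, so that the clique occupies the
  interval K = {a..b} of m = b - a + 1 = p vertices.  The Laplacian quadratic form is
  x.Lx = m (sum_K x_k^2) - (sum_K x_k)^2 + sum of (x_i - x_(i+1))^2 over the path edges outside K.
  After diagonalising L orthogonally, a d-dimensional subspace on which the Rayleigh quotient is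
  at most (at least) t yields d eigenvalues at most (at least) t.  Vectors constant on K give
  n - m + 1 eigenvalues <= 4; vectors vanishing at a and b give n - 2 eigenvalues <= m; zero-sum
  vectors supported on K give m - 1 eigenvalues >= m; the span of e_a - e_(a+1) and e_b - e_(a+1)
  gives two eigenvalues > m.  As m > 4, these counts add up to n only if all of them are sharp:
  m has multiplicity m - 3, exactly two eigenvalues exceed m, and the remaining ones are <= 4.
  The quadratic form also shows 0 <= lambda <= m + 2 for every eigenvalue lambda.
\<close>

lemma underdetermined_homogeneous_system:
  fixes M :: "'a :: field mat"
  assumes M: "M \<in> carrier_mat n d" and I: "I \<subseteq> {..<n}" and card: "card I < d"
  shows "\<exists>c \<in> carrier_vec d. c \<noteq> 0\<^sub>v d \<and> (\<forall>i\<in>I. (M *\<^sub>v c) $ i = 0)"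
proof -
  obtain h where h: "bij_betw h {0..<card I} I"
    using ex_bij_betw_nat_finite finite_subset[OF I] by blast
  define r where "r = (\<lambda>k. if k < card I then row M (h k) else 0\<^sub>v d)"
  define B where "B = mat\<^sub>r d d (\<lambda>k. if k = card I then 0\<^sub>v d else r k)"
  have "det B = 0"
    unfolding B_def using card M by (intro det_row_0) (auto simp: r_def)
  then obtain c where c: "c \<in> carrier_vec d" "c \<noteq> 0\<^sub>v d" "B *\<^sub>v c = 0\<^sub>v d"
    using det_0_iff_vec_prod_zero_field[of B d] by (auto simp: B_def)
  have "(M *\<^sub>v c) $ i = 0" if "i \<in> I" for i
  proof -
    obtain k where k: "k < card I" "i = h k"
      using h \<open>i \<in> I\<close> by (metis atLeastLessThan_iff bij_betw_iff_bijections)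
    have "(M *\<^sub>v c) $ i = (B *\<^sub>v c) $ k"
      using k card I M \<open>i \<in> I\<close> by (auto simp: B_def r_def)
    with c(3) k card show ?thesis by simp
  qed
  with c show ?thesis by blast
qed

lemma nonzero_vecE:
  assumes "c \<in> carrier_vec d" "c \<noteq> 0\<^sub>v d"
  obtains j where "j < d" "c $ j \<noteq> 0"
  using assms by (metis carrier_vecD eq_vecI index_zero_vec)

lemma mult_mat_vec_index:
  assumes "c \<in> carrier_vec d" "k < n"
  shows "(mat n d w *\<^sub>v c) $ k = (\<Sum>j<d. w (k, j) * c $ j)"
  using assms by (simp add: scalar_prod_def atLeast0LessThan)

lemma mult_mat_vec_selection:
  fixes c :: "'a :: comm_semiring_1 vec"
  assumes c: "c \<in> carrier_vec d" and k: "k < n" and \<phi>: "Q k \<Longrightarrow> \<phi> k < d"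
  shows "(mat n d (\<lambda>(k, j). of_bool (Q k \<and> \<phi> k = j)) *\<^sub>v c) $ k = (if Q k then c $ \<phi> k else 0)"
proof (cases "Q k")
  case True
  have "(\<Sum>j<d. of_bool (\<phi> k = j) * c $ j) = (\<Sum>j<d. if j = \<phi> k then c $ j else 0)"
    by (rule sum.cong) auto
  then show ?thesis using c k True \<phi> by (simp add: scalar_prod_def atLeast0LessThan)
qed (use c k in \<open>simp add: scalar_prod_def\<close>)

lemma sum_mult_mat_vec_column_sums_zero:
  fixes w :: "nat \<times> nat \<Rightarrow> 'a :: comm_ring_1"
  assumes c: "c \<in> carrier_vec d" and K: "K \<subseteq> {..<n}"
    and col: "\<And>j. j < d \<Longrightarrow> (\<Sum>k\<in>K. w (k, j)) = 0"
  shows "(\<Sum>k\<in>K. (mat n d w *\<^sub>v c) $ k) = 0"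
proof -
  have "(\<Sum>k\<in>K. (mat n d w *\<^sub>v c) $ k) = (\<Sum>k\<in>K. \<Sum>j<d. w (k, j) * c $ j)"
    using K c by (intro sum.cong refl mult_mat_vec_index) auto
  also have "\<dots> = (\<Sum>j<d. (\<Sum>k\<in>K. w (k, j)) * c $ j)"
    by (subst sum.swap) (simp add: sum_distrib_right)
  also have "\<dots> = 0" using col by simp
  finally show ?thesis .
qed

lemma scalar_prod_self_eq_sum:
  fixes x :: "real vec"
  assumes "x \<in> carrier_vec n"
  shows "x \<bullet> x = (\<Sum>k<n. (x $ k)\<^sup>2)"
  using assms by (simp add: scalar_prod_def atLeast0LessThan power2_eq_square)

lemma sum_weighted_squares_le:
  fixes x :: "real vec"
  assumes x: "x \<in> carrier_vec n" and w: "\<And>k. k < n \<Longrightarrow> x $ k \<noteq> 0 \<Longrightarrow> w k \<le> c"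
  shows "(\<Sum>k<n. w k * (x $ k)\<^sup>2) \<le> c * (x \<bullet> x)"
proof -
  have "(\<Sum>k<n. w k * (x $ k)\<^sup>2) \<le> (\<Sum>k<n. c * (x $ k)\<^sup>2)"
  proof (rule sum_mono)
    fix k assume "k \<in> {..<n}"
    then show "w k * (x $ k)\<^sup>2 \<le> c * (x $ k)\<^sup>2"
      using w[of k] by (cases "x $ k = 0") (auto intro: mult_right_mono)
  qed
  then show ?thesis by (simp add: scalar_prod_self_eq_sum[OF x] sum_distrib_left)
qed

section \<open>The spectral theorem for real symmetric matrices\<close>

lemma real_symmetric_eigenvalue_real:
  fixes A :: "real mat"
  assumes A: "A \<in> carrier_mat n n" and sym: "transpose_mat A = A"
    and z: "z \<in> carrier_vec n" "z \<noteq> 0\<^sub>v n"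
    and ev: "map_mat complex_of_real A *\<^sub>v z = l \<cdot>\<^sub>v z"
  shows "l \<in> \<real>"
proof -
  have row: "(\<Sum>j<n. of_real (A $$ (i,j)) * z $ j) = l * z $ i" if "i < n" for i
    using arg_cong[OF ev, of "\<lambda>v. v $ i"] that A z
    by (simp add: scalar_prod_def atLeast0LessThan)
  define S where "S = (\<Sum>i<n. \<Sum>j<n. cnj (z $ i) * of_real (A $$ (i,j)) * z $ j)"
  define N where "N = (\<Sum>i<n. cnj (z $ i) * z $ i)"
  have "S = (\<Sum>i<n. cnj (z $ i) * (\<Sum>j<n. of_real (A $$ (i,j)) * z $ j))"
    unfolding S_def by (simp add: sum_distrib_left mult.assoc)
  also have "\<dots> = (\<Sum>i<n. cnj (z $ i) * (l * z $ i))"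
    by (intro sum.cong refl) (simp add: row)
  also have "\<dots> = l * N"
    unfolding N_def by (simp add: sum_distrib_left mult_ac)
  finally have "S = l * N" .
  moreover have "cnj S = S"
  proof -
    have symA: "z $ i * of_real (A $$ (i,j)) * cnj (z $ j) = cnj (z $ j) * of_real (A $$ (j,i)) * z $ i"
      if "i < n" "j < n" for i j
      using arg_cong[OF sym, of "\<lambda>B. B $$ (i,j)"] that A by (simp add: mult_ac)
    have "cnj S = (\<Sum>i<n. \<Sum>j<n. z $ i * of_real (A $$ (i,j)) * cnj (z $ j))"
      unfolding S_def by simp
    also have "\<dots> = (\<Sum>j<n. \<Sum>i<n. z $ i * of_real (A $$ (i,j)) * cnj (z $ j))"
      by (rule sum.swap)
    also have "\<dots> = S"
      unfolding S_def by (intro sum.cong refl) (simp add: symA)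
    finally show ?thesis .
  qed
  moreover have "cnj N = N" unfolding N_def by (simp add: mult.commute)
  moreover have "N \<noteq> 0"
    using conjugate_square_eq_0_vec[OF z(1)] z(2) z(1)
    by (simp add: N_def scalar_prod_def atLeast0LessThan mult.commute)
  ultimately have "cnj l * N = l * N" by (metis complex_cnj_mult)
  with \<open>N \<noteq> 0\<close> have "cnj l = l" by simp
  then show ?thesis using Reals_cnj_iff by blast
qed

lemma real_symmetric_has_eigenvector:
  fixes A :: "real mat"
  assumes A: "A \<in> carrier_mat n n" and sym: "transpose_mat A = A" and n: "0 < n"
  shows "\<exists>e v. eigenvector A v e"
proof -
  let ?Ac = "map_mat complex_of_real A"
  have Ac: "?Ac \<in> carrier_mat n n" using A by simp
  obtain as where "char_poly ?Ac = (\<Prod>a\<leftarrow>as. [:- a, 1:])" "length as = n"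
    using char_poly_factorized[OF Ac] by blast
  then obtain l where "poly (char_poly ?Ac) l = 0"
    using n by (cases as) auto
  then have "eigenvalue ?Ac l" using eigenvalue_root_char_poly[OF Ac] by simp
  then obtain z where "eigenvector ?Ac z l" unfolding eigenvalue_def by blast
  then have "l \<in> \<real>"
    using A by (intro real_symmetric_eigenvalue_real[OF A sym]) (auto simp: eigenvector_def)
  then obtain r where r: "l = of_real r" by (metis Reals_cases)
  have "of_real (poly (char_poly A) r) = (0 :: complex)"
    using \<open>poly (char_poly ?Ac) l = 0\<close> unfolding r of_real_hom.char_poly_hom[OF A] by simp
  then have "eigenvalue A r" using eigenvalue_root_char_poly[OF A] by simp
  then show ?thesis unfolding eigenvalue_def by blast
qed

definition orthonormal_mat :: "nat \<Rightarrow> real mat \<Rightarrow> bool" where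
  "orthonormal_mat n U \<longleftrightarrow> U \<in> carrier_mat n n \<and> transpose_mat U * U = 1\<^sub>m n"

lemma orthonormal_mat_right_inverse:
  assumes "orthonormal_mat n U"
  shows "U * transpose_mat U = 1\<^sub>m n"
  using assms mat_mult_left_right_inverse[of "transpose_mat U" n U]
  unfolding orthonormal_mat_def by auto

lemma orthonormal_mat_mult:
  assumes "orthonormal_mat n U" "orthonormal_mat n V"
  shows "orthonormal_mat n (U * V)"
proof -
  have U: "U \<in> carrier_mat n n" "transpose_mat U * U = 1\<^sub>m n"
    and V: "V \<in> carrier_mat n n" "transpose_mat V * V = 1\<^sub>m n"
    using assms unfolding orthonormal_mat_def by auto
  have "transpose_mat U * (U * V) = (transpose_mat U * U) * V"
    by (rule assoc_mult_mat[symmetric]) (use U V in auto)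
  also have "\<dots> = V" using U V by simp
  finally have "transpose_mat (U * V) * (U * V) = transpose_mat V * V"
    using U V by (simp add: transpose_mult[of _ n n] assoc_mult_mat[of _ n n _ n _ n])
  then show ?thesis using U V unfolding orthonormal_mat_def by simp
qed

lemma orthonormal_mat_of_orthogonal_cols:
  fixes ws :: "real vec list"
  assumes ws: "set ws \<subseteq> carrier_vec n" "corthogonal ws" "length ws = n"
  shows "orthonormal_mat n (mat_of_cols n (map (\<lambda>w. (1 / sqrt (w \<bullet> w)) \<cdot>\<^sub>v w) ws))"
    (is "orthonormal_mat n ?W")
proof -
  have ws_i: "ws ! i \<in> carrier_vec n" if "i < n" for i using ws that by auto
  have orth: "ws ! i \<bullet> ws ! j = 0 \<longleftrightarrow> i \<noteq> j" if "i < n" "j < n" for i j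
    using corthogonalD[OF ws(2), of i j] that ws(3) by simp
  have pos: "ws ! i \<bullet> ws ! i > 0" if "i < n" for i
    using orth[OF that that] conjugate_square_ge_0_vec[of "ws ! i"] by simp
  have W: "?W \<in> carrier_mat n n" by (metis mat_of_cols_carrier(1) length_map ws(3))
  have "transpose_mat ?W * ?W = 1\<^sub>m n"
  proof (rule eq_matI)
    fix i j assume "i < dim_row (1\<^sub>m n)" "j < dim_col (1\<^sub>m n)"
    then have ij: "i < n" "j < n" by auto
    have "(transpose_mat ?W * ?W) $$ (i, j) =
        (ws ! i \<bullet> ws ! j) / (sqrt (ws ! i \<bullet> ws ! i) * sqrt (ws ! j \<bullet> ws ! j))"
      using ij W ws(3) ws_i[OF ij(1)] ws_i[OF ij(2)] by simp
    also have "\<dots> = 1\<^sub>m n $$ (i, j)"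
      using orth[OF ij] pos[OF ij(1)] ij by (auto simp: real_sqrt_mult[symmetric])
    finally show "(transpose_mat ?W * ?W) $$ (i, j) = 1\<^sub>m n $$ (i, j)" .
  qed (use W in auto)
  with W show ?thesis unfolding orthonormal_mat_def by blast
qed

lemma orthonormal_basis_extension:
  fixes v :: "real vec"
  assumes v: "v \<in> carrier_vec n" and v0: "v \<noteq> 0\<^sub>v n"
  shows "\<exists>W. orthonormal_mat n W \<and> col W 0 = (1 / sqrt (v \<bullet> v)) \<cdot>\<^sub>v v"
proof -
  interpret cof_vec_space n "TYPE(real)" .
  define b where "b = basis_completion v"
  from basis_completion[OF v v0, folded b_def]
  have b: "distinct b" "\<not> lin_dep (set b)" "set b \<subseteq> carrier_vec n" "hd b = v" "length b = n"
    by auto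
  have "n \<noteq> 0" using v v0 by auto
  with b obtain vs where bv: "b = v # vs" by (cases b) auto
  define ws where "ws = gram_schmidt n b"
  from gram_schmidt_result[OF b(3,1,2) refl, folded ws_def]
  have ws: "set ws \<subseteq> carrier_vec n" "corthogonal ws" "length ws = n"
    by (auto simp: b(5))
  have "hd ws = v" using gram_schmidt_hd[OF v, of vs] unfolding ws_def bv .
  with \<open>n \<noteq> 0\<close> ws obtain ws' where "ws = v # ws'" by (cases ws) auto
  then have "col (mat_of_cols n (map (\<lambda>w. (1 / sqrt (w \<bullet> w)) \<cdot>\<^sub>v w) ws)) 0 = (1 / sqrt (v \<bullet> v)) \<cdot>\<^sub>v v"
    using v \<open>n \<noteq> 0\<close> ws(3) by simp
  with orthonormal_mat_of_orthogonal_cols[OF ws] show ?thesis by blast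
qed

definition spectral_decomposition :: "nat \<Rightarrow> real mat \<Rightarrow> real mat \<Rightarrow> real mat \<Rightarrow> bool" where
  "spectral_decomposition n A U D \<longleftrightarrow>
     orthonormal_mat n U \<and> D \<in> carrier_mat n n \<and> diagonal_mat D \<and> A = U * D * transpose_mat U"

lemma symmetric_scalar_prod_swap:
  fixes A :: "'a :: comm_semiring_0 mat"
  assumes A: "A \<in> carrier_mat n n" and sym: "transpose_mat A = A"
    and u: "u \<in> carrier_vec n" and v: "v \<in> carrier_vec n"
  shows "u \<bullet> (A *\<^sub>v v) = v \<bullet> (A *\<^sub>v u)"
proof -
  have "u \<bullet> (A *\<^sub>v v) = (transpose_mat A *\<^sub>v u) \<bullet> v"
    using transpose_vec_mult_scalar[OF A v u] by simp
  also have "\<dots> = v \<bullet> (A *\<^sub>v u)"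
    unfolding sym using A u v by (intro comm_scalar_prod) auto
  finally show ?thesis .
qed

lemma symmetric_mat_four_block_first_col:
  fixes B :: "'a :: zero mat"
  assumes B: "B \<in> carrier_mat (Suc m) (Suc m)"
    and sym: "\<And>i j. i < Suc m \<Longrightarrow> j < Suc m \<Longrightarrow> B $$ (i,j) = B $$ (j,i)"
    and col0: "\<And>i. i < Suc m \<Longrightarrow> B $$ (i,0) = (if i = 0 then e else 0)"
  shows "B = four_block_mat (mat 1 1 (\<lambda>_. e)) (0\<^sub>m 1 m) (0\<^sub>m m 1)
    (mat m m (\<lambda>(i,j). B $$ (Suc i, Suc j)))" (is "B = ?F")
proof (rule eq_matI)
  fix i j assume "i < dim_row ?F" "j < dim_col ?F"
  then have ij: "i < Suc m" "j < Suc m" by auto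
  have row0: "B $$ (0,j) = (if j = 0 then e else 0)" using sym[OF _ ij(2)] col0[OF ij(2)] by simp
  show "B $$ (i,j) = ?F $$ (i,j)"
  proof (cases "i = 0 \<or> j = 0")
    case True
    then show ?thesis using ij col0 row0 by auto
  next
    case False
    then show ?thesis using ij by (auto simp: gr0_conv_Suc)
  qed
qed (use B in auto)

lemma symmetric_deflation:
  fixes A :: "real mat"
  assumes A: "A \<in> carrier_mat (Suc m) (Suc m)" and sym: "transpose_mat A = A"
    and W: "orthonormal_mat (Suc m) W" and ev: "A *\<^sub>v col W 0 = e \<cdot>\<^sub>v col W 0"
  obtains A3 where "A3 \<in> carrier_mat m m" "transpose_mat A3 = A3"
    "transpose_mat W * A * W = four_block_mat (mat 1 1 (\<lambda>_. e)) (0\<^sub>m 1 m) (0\<^sub>m m 1) A3"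
proof -
  let ?n = "Suc m"
  define A' where "A' = transpose_mat W * A * W"
  have Wc: "W \<in> carrier_mat ?n ?n" and WtW: "transpose_mat W * W = 1\<^sub>m ?n"
    using W unfolding orthonormal_mat_def by auto
  have A': "A' \<in> carrier_mat ?n ?n" unfolding A'_def using A Wc by simp
  have entry: "A' $$ (i,j) = col W i \<bullet> (A *\<^sub>v col W j)" if "i < ?n" "j < ?n" for i j
  proof -
    have "A' = transpose_mat W * (A * W)"
      unfolding A'_def by (rule assoc_mult_mat) (use A Wc in auto)
    also have "\<dots> $$ (i,j) = row (transpose_mat W) i \<bullet> col (A * W) j"
      using that A Wc by (intro index_mult_mat(1)) auto
    also have "row (transpose_mat W) i = col W i" using that Wc by simp
    also have "col (A * W) j = A *\<^sub>v col W j" by (rule col_mult2) (use that A Wc in auto)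
    finally show ?thesis .
  qed
  have A'_sym: "A' $$ (i,j) = A' $$ (j,i)" if "i < ?n" "j < ?n" for i j
    using that Wc by (simp add: entry symmetric_scalar_prod_swap[OF A sym])
  have A'_col0: "A' $$ (i,0) = (if i = 0 then e else 0)" if "i < ?n" for i
  proof -
    have "A' $$ (i,0) = e * (col W i \<bullet> col W 0)"
      using that Wc by (simp add: entry ev)
    also have "col W i \<bullet> col W 0 = (transpose_mat W * W) $$ (i,0)"
      using that Wc by simp
    finally show ?thesis using that by (simp add: WtW)
  qed
  show thesis
  proof
    show "mat m m (\<lambda>(i,j). A' $$ (Suc i, Suc j)) \<in> carrier_mat m m" by simp
    show "transpose_mat (mat m m (\<lambda>(i,j). A' $$ (Suc i, Suc j))) = mat m m (\<lambda>(i,j). A' $$ (Suc i, Suc j))"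
      by (rule eq_matI) (auto intro!: A'_sym)
    show "transpose_mat W * A * W = four_block_mat (mat 1 1 (\<lambda>_. e)) (0\<^sub>m 1 m) (0\<^sub>m m 1)
        (mat m m (\<lambda>(i,j). A' $$ (Suc i, Suc j)))"
      unfolding A'_def[symmetric] using A' A'_sym A'_col0 by (rule symmetric_mat_four_block_first_col)
  qed
qed

lemma spectral_decomposition_four_block:
  assumes "spectral_decomposition m A3 U3 D3"
  shows "spectral_decomposition (Suc m)
    (four_block_mat (mat 1 1 (\<lambda>_. e)) (0\<^sub>m 1 m) (0\<^sub>m m 1) A3)
    (four_block_mat (1\<^sub>m 1) (0\<^sub>m 1 m) (0\<^sub>m m 1) U3)
    (four_block_mat (mat 1 1 (\<lambda>_. e)) (0\<^sub>m 1 m) (0\<^sub>m m 1) D3)"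
proof -
  from assms have U3: "U3 \<in> carrier_mat m m" and U3U3: "transpose_mat U3 * U3 = 1\<^sub>m m"
    and D3: "D3 \<in> carrier_mat m m" and dD3: "diagonal_mat D3"
    and A3: "A3 = U3 * D3 * transpose_mat U3"
    unfolding spectral_decomposition_def orthonormal_mat_def by auto
  define E :: "real mat" where "E = mat 1 1 (\<lambda>_. e)"
  define U where "U = four_block_mat (1\<^sub>m 1) (0\<^sub>m 1 m) (0\<^sub>m m 1) U3"
  define D where "D = four_block_mat E (0\<^sub>m 1 m) (0\<^sub>m m 1) D3"
  have E: "E \<in> carrier_mat 1 1" unfolding E_def by simp
  have U3t: "transpose_mat U3 \<in> carrier_mat m m" using U3 by simp
  have Ut: "transpose_mat U = four_block_mat (1\<^sub>m 1) (0\<^sub>m 1 m) (0\<^sub>m m 1) (transpose_mat U3)"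
    unfolding U_def using U3 by (subst transpose_four_block_mat) auto
  have "transpose_mat U * U = 1\<^sub>m (Suc m)"
    unfolding Ut unfolding U_def
    by (subst mult_four_block_mat[OF _ _ _ U3t _ _ _ U3]) (use U3 U3U3 in auto)
  moreover have "U * D * transpose_mat U = four_block_mat E (0\<^sub>m 1 m) (0\<^sub>m m 1) A3"
  proof -
    have UD: "U * D = four_block_mat E (0\<^sub>m 1 m) (0\<^sub>m m 1) (U3 * D3)"
      unfolding U_def D_def
      by (subst mult_four_block_mat[OF _ _ _ U3 E _ _ D3]) (use U3 D3 E in auto)
    then show ?thesis
      unfolding Ut A3 UD
      by (subst mult_four_block_mat[OF E _ _ _ _ _ _ U3t]) (use U3 D3 E in auto)
  qed
  moreover have "U \<in> carrier_mat (Suc m) (Suc m)" "D \<in> carrier_mat (Suc m) (Suc m)"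
    unfolding U_def D_def using U3 D3 E by auto
  moreover have "diagonal_mat D"
    unfolding D_def diagonal_mat_def using D3 E dD3 by (auto simp: diagonal_mat_def E_def)
  ultimately show ?thesis
    unfolding spectral_decomposition_def orthonormal_mat_def U_def D_def E_def by auto
qed

lemma spectral_decomposition_conj:
  assumes W: "orthonormal_mat n W" and A: "A \<in> carrier_mat n n"
    and S: "spectral_decomposition n (transpose_mat W * A * W) U D"
  shows "spectral_decomposition n A (W * U) D"
proof -
  have Wc: "W \<in> carrier_mat n n" using W unfolding orthonormal_mat_def by simp
  from S have U: "orthonormal_mat n U" and Uc: "U \<in> carrier_mat n n" and D: "D \<in> carrier_mat n n"
    and eq: "transpose_mat W * A * W = U * D * transpose_mat U"
    unfolding spectral_decomposition_def orthonormal_mat_def by auto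
  have "A = (W * transpose_mat W) * A * (W * transpose_mat W)"
    using orthonormal_mat_right_inverse[OF W] A by simp
  also have "\<dots> = W * (transpose_mat W * A * W) * transpose_mat W"
    using Wc A by (simp add: assoc_mult_mat[of _ n n _ n _ n])
  also have "\<dots> = (W * U) * D * transpose_mat (W * U)"
    unfolding eq using Wc Uc D
    by (simp add: transpose_mult[of _ n n] assoc_mult_mat[of _ n n _ n _ n])
  finally show ?thesis
    using S orthonormal_mat_mult[OF W U] unfolding spectral_decomposition_def by blast
qed

theorem spectral_theorem:
  fixes A :: "real mat"
  assumes "A \<in> carrier_mat n n" "transpose_mat A = A"
  shows "\<exists>U D. spectral_decomposition n A U D"
  using assms
proof (induction n arbitrary: A)
  case 0
  then have "spectral_decomposition 0 A (1\<^sub>m 0) (1\<^sub>m 0)"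
    by (auto simp: spectral_decomposition_def orthonormal_mat_def diagonal_mat_def)
  then show ?case by blast
next
  case (Suc m)
  obtain e v where "eigenvector A v e"
    using real_symmetric_has_eigenvector[OF Suc.prems] by blast
  then have v: "v \<in> carrier_vec (Suc m)" "v \<noteq> 0\<^sub>v (Suc m)" and ev: "A *\<^sub>v v = e \<cdot>\<^sub>v v"
    using Suc.prems(1) unfolding eigenvector_def by auto
  obtain W where W: "orthonormal_mat (Suc m) W" and col_W: "col W 0 = (1 / sqrt (v \<bullet> v)) \<cdot>\<^sub>v v"
    using orthonormal_basis_extension[OF v] by blast
  have "A *\<^sub>v col W 0 = e \<cdot>\<^sub>v col W 0"
    unfolding col_W using mult_mat_vec[OF Suc.prems(1) v(1)] ev by (simp add: smult_smult_assoc mult.commute)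
  then obtain A3 where A3: "A3 \<in> carrier_mat m m" "transpose_mat A3 = A3"
    and W_A_W: "transpose_mat W * A * W = four_block_mat (mat 1 1 (\<lambda>_. e)) (0\<^sub>m 1 m) (0\<^sub>m m 1) A3"
    using symmetric_deflation[OF Suc.prems W] by blast
  obtain U3 D3 where "spectral_decomposition m A3 U3 D3" using Suc.IH[OF A3] by blast
  from spectral_decomposition_four_block[OF this, of e]
  show ?case
    unfolding W_A_W[symmetric] using spectral_decomposition_conj[OF W Suc.prems(1)] by blast
qed

lemma spectral_decomposition_char_poly:
  assumes "spectral_decomposition n A U D"
  shows "char_poly A = (\<Prod>e\<leftarrow>diag_mat D. [:- e, 1:])"
proof -
  from assms have U: "U \<in> carrier_mat n n" and D: "D \<in> carrier_mat n n" and dD: "diagonal_mat D"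
    and UtU: "transpose_mat U * U = 1\<^sub>m n" and A: "A = U * D * transpose_mat U"
    unfolding spectral_decomposition_def orthonormal_mat_def by auto
  have "similar_mat A D"
    unfolding similar_mat_def similar_mat_wit_def
    using U D A UtU orthonormal_mat_right_inverse assms unfolding spectral_decomposition_def
    by (intro exI[of _ U] exI[of _ "transpose_mat U"]) (auto simp: Let_def)
  moreover have "upper_triangular D"
    using dD D unfolding upper_triangular_def diagonal_mat_def by auto
  ultimately show ?thesis using char_poly_similar char_poly_upper_triangular[OF D] by metis
qed

lemma size_filter_mset_diag_mat:
  assumes "D \<in> carrier_mat n n"
  shows "size {#x \<in># mset (diag_mat D). P x#} = card {i. i < n \<and> P (D $$ (i,i))}"
proof -
  have "size {#x \<in># mset (diag_mat D). P x#} = length (filter P (diag_mat D))"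
    by (simp only: mset_filter[symmetric] size_mset)
  also have "\<dots> = card {i. i < length (diag_mat D) \<and> P (diag_mat D ! i)}"
    by (rule length_filter_conv_card)
  also have "{i. i < length (diag_mat D) \<and> P (diag_mat D ! i)} = {i. i < n \<and> P (D $$ (i,i))}"
    using assms by (auto simp: diag_mat_def)
  finally show ?thesis .
qed

section \<open>Counting eigenvalues with test subspaces\<close>

lemma diagonal_mat_quadratic_form:
  fixes D :: "'a :: comm_ring_1 mat"
  assumes D: "D \<in> carrier_mat n n" "diagonal_mat D" and y: "y \<in> carrier_vec n"
  shows "y \<bullet> (D *\<^sub>v y) = (\<Sum>i<n. D $$ (i,i) * (y $ i)\<^sup>2)"
proof -
  have Dy: "(D *\<^sub>v y) $ i = D $$ (i,i) * y $ i" if "i < n" for i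
  proof -
    have "(D *\<^sub>v y) $ i = (\<Sum>k\<in>{0..<n}. D $$ (i,k) * y $ k)"
      using that D y by (simp add: scalar_prod_def)
    also have "\<dots> = (\<Sum>k\<in>{0..<n}. if k = i then D $$ (i,i) * y $ i else 0)"
      by (rule sum.cong) (use that D in \<open>auto simp: diagonal_mat_def\<close>)
    finally show ?thesis using that by simp
  qed
  have "y \<bullet> (D *\<^sub>v y) = (\<Sum>i\<in>{0..<n}. y $ i * (D *\<^sub>v y) $ i)"
    using D by (simp add: scalar_prod_def)
  also have "\<dots> = (\<Sum>i<n. D $$ (i,i) * (y $ i)\<^sup>2)"
    by (simp add: Dy atLeast0LessThan power2_eq_square mult_ac)
  finally show ?thesis .
qed

lemma spectral_decomposition_quadratic_form:
  assumes S: "spectral_decomposition n A U D" and x: "x \<in> carrier_vec n"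
  shows "x \<bullet> (A *\<^sub>v x) - t * (x \<bullet> x) =
    (\<Sum>i<n. (D $$ (i,i) - t) * ((transpose_mat U *\<^sub>v x) $ i)\<^sup>2)"
proof -
  from S have U: "U \<in> carrier_mat n n" and D: "D \<in> carrier_mat n n" "diagonal_mat D"
    and A: "A = U * D * transpose_mat U"
    unfolding spectral_decomposition_def orthonormal_mat_def by auto
  define y where "y = transpose_mat U *\<^sub>v x"
  have y: "y \<in> carrier_vec n" unfolding y_def using U x by simp
  have "U *\<^sub>v y = (U * transpose_mat U) *\<^sub>v x"
    unfolding y_def using U x by simp
  also have "U * transpose_mat U = 1\<^sub>m n"
    using S orthonormal_mat_right_inverse unfolding spectral_decomposition_def by blast
  finally have x_eq: "U *\<^sub>v y = x" using x by simp
  have "A *\<^sub>v x = (U * D) *\<^sub>v y"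
    unfolding A y_def by (rule assoc_mult_mat_vec) (use U D x in auto)
  also have "\<dots> = U *\<^sub>v (D *\<^sub>v y)"
    by (rule assoc_mult_mat_vec) (use U D y in auto)
  finally have "x \<bullet> (A *\<^sub>v x) = x \<bullet> (U *\<^sub>v (D *\<^sub>v y))" by simp
  also have "\<dots> = y \<bullet> (D *\<^sub>v y)"
    unfolding y_def by (rule transpose_vec_mult_scalar[symmetric]) (use U D x in auto)
  finally have xAx: "x \<bullet> (A *\<^sub>v x) = (\<Sum>i<n. D $$ (i,i) * (y $ i)\<^sup>2)"
    using diagonal_mat_quadratic_form[OF D y] by simp
  have "x \<bullet> x = x \<bullet> (U *\<^sub>v y)" by (simp only: x_eq)
  also have "\<dots> = y \<bullet> y"
    unfolding y_def by (rule transpose_vec_mult_scalar[symmetric]) (use U x in auto)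
  finally have "x \<bullet> x = (\<Sum>i<n. (y $ i)\<^sup>2)" using scalar_prod_self_eq_sum[OF y] by simp
  with xAx show ?thesis
    unfolding y_def[symmetric] by (simp add: sum_distrib_left left_diff_distrib sum_subtractf)
qed

lemma spectral_decomposition_coordinates_nonzero:
  assumes S: "spectral_decomposition n A U D" and x: "x \<in> carrier_vec n" "x \<noteq> 0\<^sub>v n"
  shows "\<exists>i<n. (transpose_mat U *\<^sub>v x) $ i \<noteq> 0"
proof (rule ccontr)
  assume contra: "\<not> ?thesis"
  have U: "U \<in> carrier_mat n n" and UUt: "U * transpose_mat U = 1\<^sub>m n"
    using S orthonormal_mat_right_inverse unfolding spectral_decomposition_def orthonormal_mat_def
    by blast+
  have "x = (U * transpose_mat U) *\<^sub>v x" using UUt x by simp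
  also have "\<dots> = U *\<^sub>v (transpose_mat U *\<^sub>v x)"
    by (rule assoc_mult_mat_vec) (use U x in auto)
  also have "transpose_mat U *\<^sub>v x = 0\<^sub>v n"
    using contra U by (intro eq_vecI) auto
  also have "U *\<^sub>v 0\<^sub>v n = 0\<^sub>v n" using U by (intro eq_vecI) auto
  finally show False using x by simp
qed

lemma dim_le_card_of_nonvanishing_coordinates:
  fixes U W :: "'a :: field mat"
  assumes U: "U \<in> carrier_mat n n" and W: "W \<in> carrier_mat n d"
    and hit: "\<And>c. c \<in> carrier_vec d \<Longrightarrow> c \<noteq> 0\<^sub>v d \<Longrightarrow>
      \<exists>i<n. P i \<and> (transpose_mat U *\<^sub>v (W *\<^sub>v c)) $ i \<noteq> 0"
  shows "d \<le> card {i. i < n \<and> P i}"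
proof (rule ccontr)
  assume "\<not> ?thesis"
  then have card: "card {i. i < n \<and> P i} < d" by simp
  have M: "transpose_mat U * W \<in> carrier_mat n d" using U W by simp
  have sub: "{i. i < n \<and> P i} \<subseteq> {..<n}" by auto
  obtain c where c: "c \<in> carrier_vec d" "c \<noteq> 0\<^sub>v d"
    and zero: "\<forall>i\<in>{i. i < n \<and> P i}. ((transpose_mat U * W) *\<^sub>v c) $ i = 0"
    using underdetermined_homogeneous_system[OF M sub card] by blast
  have "(transpose_mat U * W) *\<^sub>v c = transpose_mat U *\<^sub>v (W *\<^sub>v c)"
    using U W c by simp
  with hit[OF c] zero show False by auto
qed

lemma card_eigenvalues_le:
  assumes S: "spectral_decomposition n A U D" and W: "W \<in> carrier_mat n d"
    and rayleigh: "\<And>c. c \<in> carrier_vec d \<Longrightarrow> c \<noteq> 0\<^sub>v d \<Longrightarrow> W *\<^sub>v c \<noteq> 0\<^sub>v n \<and>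
      (W *\<^sub>v c) \<bullet> (A *\<^sub>v (W *\<^sub>v c)) \<le> t * ((W *\<^sub>v c) \<bullet> (W *\<^sub>v c))"
  shows "d \<le> card {i. i < n \<and> D $$ (i,i) \<le> t}"
proof (rule dim_le_card_of_nonvanishing_coordinates[OF _ W])
  show "U \<in> carrier_mat n n" using S unfolding spectral_decomposition_def orthonormal_mat_def by simp
  fix c :: "real vec" assume c: "c \<in> carrier_vec d" "c \<noteq> 0\<^sub>v d"
  define x where "x = W *\<^sub>v c"
  define y where "y = transpose_mat U *\<^sub>v x"
  have x: "x \<in> carrier_vec n" using W c unfolding x_def by simp
  show "\<exists>i<n. D $$ (i,i) \<le> t \<and> (transpose_mat U *\<^sub>v (W *\<^sub>v c)) $ i \<noteq> 0"
  proof (rule ccontr)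
    assume "\<not> ?thesis"
    then have off: "y $ i = 0" if "i < n" "D $$ (i,i) \<le> t" for i
      using that unfolding y_def x_def by auto
    obtain i0 where i0: "i0 < n" "y $ i0 \<noteq> 0"
      using spectral_decomposition_coordinates_nonzero[OF S x] rayleigh[OF c]
      unfolding y_def x_def by blast
    have "0 < (\<Sum>i<n. (D $$ (i,i) - t) * (y $ i)\<^sup>2)"
    proof (rule sum_pos2)
      have "t < D $$ (i0,i0)" using i0 off[of i0] by linarith
      then show "0 < (D $$ (i0,i0) - t) * (y $ i0)\<^sup>2" using i0 by simp
      fix i assume "i \<in> {..<n}"
      then show "0 \<le> (D $$ (i,i) - t) * (y $ i)\<^sup>2"
        using off[of i] by (cases "D $$ (i,i) \<le> t") auto
    qed (use i0 in auto)
    then show False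
      using rayleigh[OF c] spectral_decomposition_quadratic_form[OF S x, of t]
      unfolding y_def x_def by linarith
  qed
qed

lemma card_eigenvalues_gt:
  assumes S: "spectral_decomposition n A U D" and W: "W \<in> carrier_mat n d"
    and rayleigh: "\<And>c. c \<in> carrier_vec d \<Longrightarrow> c \<noteq> 0\<^sub>v d \<Longrightarrow>
      (W *\<^sub>v c) \<bullet> (A *\<^sub>v (W *\<^sub>v c)) > t * ((W *\<^sub>v c) \<bullet> (W *\<^sub>v c))"
  shows "d \<le> card {i. i < n \<and> D $$ (i,i) > t}"
proof (rule dim_le_card_of_nonvanishing_coordinates[OF _ W])
  show "U \<in> carrier_mat n n" using S unfolding spectral_decomposition_def orthonormal_mat_def by simp
  fix c :: "real vec" assume c: "c \<in> carrier_vec d" "c \<noteq> 0\<^sub>v d"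
  define x where "x = W *\<^sub>v c"
  define y where "y = transpose_mat U *\<^sub>v x"
  have x: "x \<in> carrier_vec n" using W c unfolding x_def by simp
  show "\<exists>i<n. D $$ (i,i) > t \<and> (transpose_mat U *\<^sub>v (W *\<^sub>v c)) $ i \<noteq> 0"
  proof (rule ccontr)
    assume "\<not> ?thesis"
    then have off: "y $ i = 0" if "i < n" "D $$ (i,i) > t" for i
      using that unfolding y_def x_def by auto
    have "(\<Sum>i<n. (D $$ (i,i) - t) * (y $ i)\<^sup>2) \<le> 0"
    proof (rule sum_nonpos)
      fix i assume "i \<in> {..<n}"
      then show "(D $$ (i,i) - t) * (y $ i)\<^sup>2 \<le> 0"
        using off[of i] by (cases "D $$ (i,i) > t") (auto intro: mult_nonpos_nonneg)
    qed
    then show False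
      using rayleigh[OF c] spectral_decomposition_quadratic_form[OF S x, of t]
      unfolding y_def x_def by linarith
  qed
qed

lemma spectral_decomposition_uminus:
  assumes "spectral_decomposition n A U D"
  shows "spectral_decomposition n (- A) U (- D)"
proof -
  from assms have U: "U \<in> carrier_mat n n" and D: "D \<in> carrier_mat n n"
    and dD: "diagonal_mat D" and A: "A = U * D * transpose_mat U"
    unfolding spectral_decomposition_def orthonormal_mat_def by auto
  have "- A = U * (- D) * transpose_mat U" using U D unfolding A by simp
  moreover have "diagonal_mat (- D)" using dD D unfolding diagonal_mat_def by simp
  ultimately show ?thesis using assms D unfolding spectral_decomposition_def by simp
qed

lemma card_eigenvalues_ge:
  assumes S: "spectral_decomposition n A U D" and W: "W \<in> carrier_mat n d"
    and rayleigh: "\<And>c. c \<in> carrier_vec d \<Longrightarrow> c \<noteq> 0\<^sub>v d \<Longrightarrow> W *\<^sub>v c \<noteq> 0\<^sub>v n \<and>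
      (W *\<^sub>v c) \<bullet> (A *\<^sub>v (W *\<^sub>v c)) \<ge> t * ((W *\<^sub>v c) \<bullet> (W *\<^sub>v c))"
  shows "d \<le> card {i. i < n \<and> D $$ (i,i) \<ge> t}"
proof -
  have D: "D \<in> carrier_mat n n" and A: "A \<in> carrier_mat n n"
    using S unfolding spectral_decomposition_def orthonormal_mat_def by auto
  have "d \<le> card {i. i < n \<and> (- D) $$ (i,i) \<le> - t}"
  proof (rule card_eigenvalues_le[OF spectral_decomposition_uminus[OF S] W])
    fix c :: "real vec" assume "c \<in> carrier_vec d" "c \<noteq> 0\<^sub>v d"
    then show "W *\<^sub>v c \<noteq> 0\<^sub>v n \<and>
      (W *\<^sub>v c) \<bullet> (- A *\<^sub>v (W *\<^sub>v c)) \<le> - t * ((W *\<^sub>v c) \<bullet> (W *\<^sub>v c))"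
      using rayleigh[of c] A W by simp
  qed
  also have "{i. i < n \<and> (- D) $$ (i,i) \<le> - t} = {i. i < n \<and> D $$ (i,i) \<ge> t}"
    using D by auto
  finally show ?thesis .
qed

lemma card_ge_imp_all:
  assumes "n \<le> card {i. i < n \<and> P i}" "i < n"
  shows "P i"
proof -
  have "{i. i < n \<and> P i} = {..<n}"
    by (rule card_seteq) (use assms(1) in auto)
  then show ?thesis using assms(2) by auto
qed

section \<open>Laplacian of a path with a clique inserted\<close>

definition graph_laplacian :: "nat \<Rightarrow> (nat \<Rightarrow> nat \<Rightarrow> bool) \<Rightarrow> real mat" where
  "graph_laplacian n E = mat n n (\<lambda>(i, j).
     if i = j then real (card {k. k < n \<and> E i k}) else if E i j then -1 else 0)"

lemma graph_laplacian_carrier: "graph_laplacian n E \<in> carrier_mat n n"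
  by (simp add: graph_laplacian_def)

lemma graph_laplacian_symmetric:
  assumes "\<And>i j. E i j \<longleftrightarrow> E j i"
  shows "transpose_mat (graph_laplacian n E) = graph_laplacian n E"
  using assms by (intro eq_matI) (auto simp: graph_laplacian_def)

lemma graph_laplacian_quadratic_form:
  assumes sym: "\<And>i j. E i j \<longleftrightarrow> E j i" and irrefl: "\<And>i. \<not> E i i"
    and x: "x \<in> carrier_vec n"
  shows "2 * (x \<bullet> (graph_laplacian n E *\<^sub>v x)) =
    (\<Sum>i<n. \<Sum>j<n. of_bool (E i j) * (x $ i - x $ j)\<^sup>2)"
proof -
  let ?L = "graph_laplacian n E"
  define e :: "nat \<Rightarrow> nat \<Rightarrow> real" where "e i j = of_bool (E i j)" for i j
  have deg: "real (card {k. k < n \<and> E i k}) = (\<Sum>j<n. e i j)" for i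
    by (simp add: e_def lessThan_def Collect_conj_eq)
  have row: "(?L *\<^sub>v x) $ i = (\<Sum>j<n. e i j * (x $ i - x $ j))" if "i < n" for i
  proof -
    have "(?L *\<^sub>v x) $ i = (\<Sum>j<n. ?L $$ (i,j) * x $ j)"
      using that x by (simp add: graph_laplacian_def scalar_prod_def atLeast0LessThan)
    also have "\<dots> = (\<Sum>j<n. (if j = i then (\<Sum>k<n. e i k) * x $ i else 0) - e i j * x $ j)"
      by (rule sum.cong) (use that irrefl in \<open>auto simp: graph_laplacian_def deg e_def\<close>)
    also have "\<dots> = (\<Sum>k<n. e i k) * x $ i - (\<Sum>j<n. e i j * x $ j)"
      using that by (simp add: sum_subtractf)
    finally show ?thesis by (simp add: sum_distrib_left sum_subtractf right_diff_distrib mult_ac)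
  qed
  have "x \<bullet> (?L *\<^sub>v x) = (\<Sum>i<n. x $ i * (?L *\<^sub>v x) $ i)"
    using x by (simp add: scalar_prod_def atLeast0LessThan graph_laplacian_def)
  also have "\<dots> = (\<Sum>i<n. \<Sum>j<n. e i j * x $ i * (x $ i - x $ j))"
    by (intro sum.cong refl) (simp add: row sum_distrib_left mult_ac)
  finally have lhs: "x \<bullet> (?L *\<^sub>v x) = (\<Sum>i<n. \<Sum>j<n. e i j * x $ i * (x $ i - x $ j))" .
  have "(\<Sum>i<n. \<Sum>j<n. e i j * x $ j * (x $ j - x $ i)) = (\<Sum>j<n. \<Sum>i<n. e i j * x $ j * (x $ j - x $ i))"
    by (rule sum.swap)
  also have "\<dots> = (\<Sum>i<n. \<Sum>j<n. e i j * x $ i * (x $ i - x $ j))"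
    by (simp add: e_def sym)
  finally have swap: "(\<Sum>i<n. \<Sum>j<n. e i j * x $ j * (x $ j - x $ i)) = \<dots>" .
  have "(\<Sum>i<n. \<Sum>j<n. e i j * (x $ i - x $ j)\<^sup>2) =
      (\<Sum>i<n. \<Sum>j<n. e i j * x $ i * (x $ i - x $ j)) + (\<Sum>i<n. \<Sum>j<n. e i j * x $ j * (x $ j - x $ i))"
    by (simp add: power2_eq_square algebra_simps flip: sum.distrib)
  also have "\<dots> = 2 * (x \<bullet> (?L *\<^sub>v x))" unfolding swap lhs by simp
  finally show ?thesis unfolding e_def by simp
qed

lemma sum_lessThan_of_bool_mult:
  fixes g :: "nat \<Rightarrow> 'a :: semiring_1"
  assumes "K \<subseteq> {..<n}"
  shows "(\<Sum>k<n. of_bool (k \<in> K) * g k) = sum g K"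
proof -
  have "{..<n} \<inter> {k. k \<in> K} = K" using assms by auto
  then show ?thesis by simp
qed

lemma sum_sum_sq_diff:
  fixes f :: "nat \<Rightarrow> real"
  assumes "finite K"
  shows "(\<Sum>i\<in>K. \<Sum>j\<in>K. (f i - f j)\<^sup>2) = 2 * (real (card K) * (\<Sum>k\<in>K. (f k)\<^sup>2) - (\<Sum>k\<in>K. f k)\<^sup>2)"
proof -
  have "(\<Sum>i\<in>K. \<Sum>j\<in>K. (f i - f j)\<^sup>2) =
      (\<Sum>i\<in>K. \<Sum>j\<in>K. (f i)\<^sup>2) + (\<Sum>i\<in>K. \<Sum>j\<in>K. (f j)\<^sup>2) - 2 * (\<Sum>i\<in>K. \<Sum>j\<in>K. f i * f j)"
    by (simp add: power2_diff sum.distrib sum_subtractf sum_distrib_left mult.assoc)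
  also have "(\<Sum>i\<in>K. \<Sum>j\<in>K. f i * f j) = (\<Sum>k\<in>K. f k)\<^sup>2"
    by (simp add: power2_eq_square sum_product)
  finally show ?thesis by (simp add: sum_distrib_left mult.commute)
qed

definition path_clique_adj :: "nat \<Rightarrow> nat \<Rightarrow> nat \<Rightarrow> nat \<Rightarrow> bool" where
  "path_clique_adj a b i j \<longleftrightarrow> i \<noteq> j \<and> (i \<in> {a..b} \<and> j \<in> {a..b} \<or> j = Suc i \<or> i = Suc j)"

definition path_energy :: "nat \<Rightarrow> nat \<Rightarrow> nat \<Rightarrow> real vec \<Rightarrow> real" where
  "path_energy n a b x = (\<Sum>i\<in>{..<n - 1} - {a..<b}. (x $ i - x $ Suc i)\<^sup>2)"

lemma path_energy_eq_sum_sum: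
  assumes "b < n"
  shows "(\<Sum>i<n. of_bool (i \<in> {..<n - 1} - {a..<b}) * (\<Sum>j<n. of_bool (j = Suc i) * (x $ i - x $ j)\<^sup>2)) =
    path_energy n a b x"
proof -
  let ?P = "{..<n - 1} - {a..<b}"
  have inner: "(\<Sum>j<n. of_bool (j = Suc i) * (x $ i - x $ j)\<^sup>2) = (x $ i - x $ Suc i)\<^sup>2" if "i \<in> ?P" for i
  proof -
    have "{..<n} \<inter> {j. j = Suc i} = {Suc i}" using that by auto
    then show ?thesis by simp
  qed
  have "?P \<subseteq> {..<n}" using assms by auto
  then have "(\<Sum>i<n. of_bool (i \<in> ?P) * (\<Sum>j<n. of_bool (j = Suc i) * (x $ i - x $ j)\<^sup>2)) =
      (\<Sum>i\<in>?P. \<Sum>j<n. of_bool (j = Suc i) * (x $ i - x $ j)\<^sup>2)"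
    by (rule sum_lessThan_of_bool_mult)
  also have "\<dots> = (\<Sum>i\<in>?P. (x $ i - x $ Suc i)\<^sup>2)"
    by (rule sum.cong[OF refl inner])
  finally show ?thesis unfolding path_energy_def .
qed

lemma path_clique_quadratic_form:
  assumes b: "b < n" and x: "x \<in> carrier_vec n"
  shows "x \<bullet> (graph_laplacian n (path_clique_adj a b) *\<^sub>v x) =
    real (Suc b - a) * (\<Sum>k\<in>{a..b}. (x $ k)\<^sup>2) - (\<Sum>k\<in>{a..b}. x $ k)\<^sup>2 + path_energy n a b x"
proof -
  let ?K = "{a..b}" and ?P = "{..<n - 1} - {a..<b}"
  define g where "g i j = (x $ i - x $ j)\<^sup>2" for i j
  have g_sym: "g i j = g j i" for i j by (simp add: g_def power2_commute)
  have K: "?K \<subseteq> {..<n}" using b by auto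
  \<comment> \<open>an edge lies in the clique or is a path edge outside it, seen once from each end\<close>
  have split: "of_bool (path_clique_adj a b i j) * g i j =
      of_bool (i \<in> ?K) * (of_bool (j \<in> ?K) * g i j)
      + of_bool (i \<in> ?P) * (of_bool (j = Suc i) * g i j)
      + of_bool (j \<in> ?P) * (of_bool (i = Suc j) * g i j)" if "i < n" "j < n" for i j
    using that by (auto simp: path_clique_adj_def g_def)
  have clique: "(\<Sum>i<n. of_bool (i \<in> ?K) * (\<Sum>j<n. of_bool (j \<in> ?K) * g i j)) = (\<Sum>i\<in>?K. \<Sum>j\<in>?K. g i j)"
    by (simp only: sum_lessThan_of_bool_mult[OF K])
  have forward: "(\<Sum>i<n. of_bool (i \<in> ?P) * (\<Sum>j<n. of_bool (j = Suc i) * g i j)) = path_energy n a b x"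
    unfolding g_def by (rule path_energy_eq_sum_sum[OF b])
  have backward: "(\<Sum>i<n. \<Sum>j<n. of_bool (j \<in> ?P) * (of_bool (i = Suc j) * g i j)) = path_energy n a b x"
  proof -
    have "(\<Sum>i<n. \<Sum>j<n. of_bool (j \<in> ?P) * (of_bool (i = Suc j) * g i j)) =
        (\<Sum>j<n. of_bool (j \<in> ?P) * (\<Sum>i<n. of_bool (i = Suc j) * g j i))"
      by (subst sum.swap) (simp only: sum_distrib_left g_sym)
    then show ?thesis using forward by simp
  qed
  have "2 * (x \<bullet> (graph_laplacian n (path_clique_adj a b) *\<^sub>v x)) =
      (\<Sum>i<n. \<Sum>j<n. of_bool (path_clique_adj a b i j) * g i j)"
    unfolding g_def by (rule graph_laplacian_quadratic_form[OF _ _ x]) (auto simp: path_clique_adj_def)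
  also have "\<dots> = (\<Sum>i<n. \<Sum>j<n. of_bool (i \<in> ?K) * (of_bool (j \<in> ?K) * g i j)
      + of_bool (i \<in> ?P) * (of_bool (j = Suc i) * g i j)
      + of_bool (j \<in> ?P) * (of_bool (i = Suc j) * g i j))"
    by (intro sum.cong refl) (rule split; simp)
  also have "\<dots> = (\<Sum>i\<in>?K. \<Sum>j\<in>?K. g i j) + 2 * path_energy n a b x"
    unfolding sum.distrib sum_distrib_left[symmetric] clique forward backward by simp
  finally show ?thesis
    using sum_sum_sq_diff[of ?K "\<lambda>k. x $ k"] unfolding g_def by simp
qed

lemma path_energy_nonneg: "0 \<le> path_energy n a b x"
  unfolding path_energy_def by (simp add: sum_nonneg)

lemma path_energy_ge_two_edges:
  assumes "i \<in> {..<n - 1} - {a..<b}" "j \<in> {..<n - 1} - {a..<b}" "i \<noteq> j"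
  shows "(x $ i - x $ Suc i)\<^sup>2 + (x $ j - x $ Suc j)\<^sup>2 \<le> path_energy n a b x"
proof -
  have "(\<Sum>k\<in>{i, j}. (x $ k - x $ Suc k)\<^sup>2) \<le> path_energy n a b x"
    unfolding path_energy_def using assms by (intro sum_mono2) auto
  then show ?thesis using assms(3) by simp
qed

text \<open>The weight of x_k is 2 for each of the edges {k, k+1} and {k-1, k} not inside the clique.\<close>

lemma path_energy_le:
  "path_energy n a b x \<le> (\<Sum>k<n. (2 * of_bool (k \<notin> {a..<b}) + 2 * of_bool (k \<notin> {a<..b})) * (x $ k)\<^sup>2)"
proof -
  let ?P = "{..<n - 1} - {a..<b}"
  have tail: "(\<Sum>k<n. of_bool (k \<notin> B) * (x $ k)\<^sup>2) = (\<Sum>k\<in>{..<n} - B. (x $ k)\<^sup>2)" for B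
  proof -
    have "{..<n} \<inter> {k. k \<notin> B} = {..<n} - B" by auto
    then show ?thesis by simp
  qed
  have "path_energy n a b x \<le> (\<Sum>i\<in>?P. 2 * (x $ i)\<^sup>2 + 2 * (x $ Suc i)\<^sup>2)"
    unfolding path_energy_def
  proof (rule sum_mono)
    fix i
    show "(x $ i - x $ Suc i)\<^sup>2 \<le> 2 * (x $ i)\<^sup>2 + 2 * (x $ Suc i)\<^sup>2"
      using sum_squares_ge_zero[of "x $ i + x $ Suc i" 0] by (simp add: power2_eq_square algebra_simps)
  qed
  also have "\<dots> = 2 * (\<Sum>i\<in>?P. (x $ i)\<^sup>2) + 2 * (\<Sum>k\<in>Suc ` ?P. (x $ k)\<^sup>2)"
    by (simp add: sum.distrib sum_distrib_left sum.reindex)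
  also have "(\<Sum>i\<in>?P. (x $ i)\<^sup>2) \<le> (\<Sum>k\<in>{..<n} - {a..<b}. (x $ k)\<^sup>2)"
    by (intro sum_mono2) auto
  also have "(\<Sum>k\<in>Suc ` ?P. (x $ k)\<^sup>2) \<le> (\<Sum>k\<in>{..<n} - {a<..b}. (x $ k)\<^sup>2)"
    by (intro sum_mono2) auto
  finally have "path_energy n a b x \<le>
      2 * (\<Sum>k\<in>{..<n} - {a..<b}. (x $ k)\<^sup>2) + 2 * (\<Sum>k\<in>{..<n} - {a<..b}. (x $ k)\<^sup>2)"
    by simp
  also have "\<dots> = (\<Sum>k<n. (2 * of_bool (k \<notin> {a..<b}) + 2 * of_bool (k \<notin> {a<..b})) * (x $ k)\<^sup>2)"
    unfolding tail[symmetric]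
    by (simp add: sum_distrib_left sum.distrib algebra_simps del: sum_of_bool_mult_eq sum_mult_of_bool_eq)
  finally show ?thesis .
qed

lemma path_clique_quadratic_form_le:
  assumes b: "b < n" and x: "x \<in> carrier_vec n"
  shows "x \<bullet> (graph_laplacian n (path_clique_adj a b) *\<^sub>v x) \<le>
    (\<Sum>k<n. (real (Suc b - a) * of_bool (k \<in> {a..b}) + 2 * of_bool (k \<notin> {a..<b})
      + 2 * of_bool (k \<notin> {a<..b})) * (x $ k)\<^sup>2) - (\<Sum>k\<in>{a..b}. x $ k)\<^sup>2"
proof -
  have "{a..b} \<subseteq> {..<n}" using b by auto
  from sum_lessThan_of_bool_mult[OF this, of "\<lambda>k. (x $ k)\<^sup>2"]
  have "real (Suc b - a) * (\<Sum>k\<in>{a..b}. (x $ k)\<^sup>2) =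
      (\<Sum>k<n. real (Suc b - a) * of_bool (k \<in> {a..b}) * (x $ k)\<^sup>2)"
    by (simp only: mult.assoc flip: sum_distrib_left)
  then show ?thesis
    using path_clique_quadratic_form[OF b x] path_energy_le[of n a b x]
    by (simp add: distrib_right sum.distrib del: sum_of_bool_mult_eq sum_mult_of_bool_eq)
qed

lemma path_clique_quadratic_form_clique_supported:
  assumes b: "b < n" and x: "x \<in> carrier_vec n"
    and supp: "\<And>k. k < n \<Longrightarrow> k \<notin> {a..b} \<Longrightarrow> x $ k = 0" and sum0: "(\<Sum>k\<in>{a..b}. x $ k) = 0"
  shows "x \<bullet> (graph_laplacian n (path_clique_adj a b) *\<^sub>v x) =
    real (Suc b - a) * (x \<bullet> x) + path_energy n a b x"
proof -
  have "x \<bullet> x = (\<Sum>k\<in>{a..b}. (x $ k)\<^sup>2)"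
    unfolding scalar_prod_self_eq_sum[OF x] using b supp
    by (intro sum.mono_neutral_right) auto
  then show ?thesis using path_clique_quadratic_form[OF b x] sum0 by simp
qed

section \<open>Eigenvalue counts for the path with a clique\<close>

lemma mset_decomposition_from_counts:
  fixes E :: "real multiset" and s t :: real and k :: nat
  assumes "s < t"
    and le_t: "size E - 2 \<le> size {#x \<in># E. x \<le> t#}"
    and gt_t: "2 \<le> size {#x \<in># E. t < x#}"
    and ge_t: "k + 2 \<le> size {#x \<in># E. t \<le> x#}"
    and le_s: "size E - (k + 2) \<le> size {#x \<in># E. x \<le> s#}"
  shows "E = replicate_mset k t + {#x \<in># E. t < x#} + {#x \<in># E. x \<le> s#}"
    and "size {#x \<in># E. t < x#} = 2"
proof -
  let ?A = "{#x \<in># E. x \<le> t#}" and ?B = "{#x \<in># E. t < x#}"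
  let ?C = "{#x \<in># E. x = t#}" and ?F = "{#x \<in># E. x \<le> s#}"
  have E: "E = ?A + ?B" by (rule multiset_eqI) auto
  then have size_AB: "size ?A + size ?B = size E" by (metis size_union)
  then show B: "size ?B = 2" using le_t gt_t ge_t by linarith
  have "{#x \<in># E. t \<le> x#} = ?C + ?B" by (rule multiset_eqI) auto
  then have C: "k \<le> size ?C" using ge_t B by simp
  have sub: "?C + ?F \<subseteq># ?A" using \<open>s < t\<close> by (intro mset_subset_eqI) auto
  have "size ?A \<le> size (?C + ?F)" using size_AB B C le_s by simp
  then have "\<not> ?C + ?F \<subset># ?A" using mset_subset_size leD by blast
  with sub have CF: "?C + ?F = ?A" by (simp add: subset_mset.le_less)
  then have "size ?C + size ?F = size ?A" by (metis size_union)
  then have "size ?C = k" using size_AB B C le_s ge_t by linarith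
  then have C_eq: "?C = replicate_mset k t" by (simp add: filter_eq_replicate_mset)
  have "E = ?C + ?F + ?B" using E unfolding CF .
  also have "\<dots> = replicate_mset k t + ?B + ?F" unfolding C_eq by (simp add: ac_simps)
  finally show "E = replicate_mset k t + ?B + ?F" .
qed

context
  fixes n a b :: nat and U D :: "real mat"
  assumes ab: "a < b" "b < n"
    and S: "spectral_decomposition n (graph_laplacian n (path_clique_adj a b)) U D"
begin

lemma path_clique_eigenvalue_le:
  assumes "i < n"
  shows "D $$ (i,i) \<le> real (Suc b - a) + 2"
proof -
  have "n \<le> card {i. i < n \<and> D $$ (i,i) \<le> real (Suc b - a) + 2}"
  proof (rule card_eigenvalues_le[OF S])
    show "1\<^sub>m n \<in> carrier_mat n n" by simp
    fix x :: "real vec" assume x: "x \<in> carrier_vec n" "x \<noteq> 0\<^sub>v n"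
    have "x \<bullet> (graph_laplacian n (path_clique_adj a b) *\<^sub>v x) \<le>
        (\<Sum>k<n. (real (Suc b - a) * of_bool (k \<in> {a..b}) + 2 * of_bool (k \<notin> {a..<b})
          + 2 * of_bool (k \<notin> {a<..b})) * (x $ k)\<^sup>2)"
      using path_clique_quadratic_form_le[OF ab(2) x(1), where a = a] by (smt (verit) zero_le_power2)
    also have "\<dots> \<le> (real (Suc b - a) + 2) * (x \<bullet> x)"
      by (rule sum_weighted_squares_le[OF x(1)]) (use ab in auto)
    finally show "1\<^sub>m n *\<^sub>v x \<noteq> 0\<^sub>v n \<and> (1\<^sub>m n *\<^sub>v x) \<bullet> (graph_laplacian n (path_clique_adj a b) *\<^sub>v (1\<^sub>m n *\<^sub>v x))
        \<le> (real (Suc b - a) + 2) * ((1\<^sub>m n *\<^sub>v x) \<bullet> (1\<^sub>m n *\<^sub>v x))"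
      using x by simp
  qed
  from card_ge_imp_all[OF this assms] show ?thesis by simp
qed

lemma path_clique_eigenvalue_nonneg:
  assumes "i < n"
  shows "0 \<le> D $$ (i,i)"
proof -
  have "n \<le> card {i. i < n \<and> D $$ (i,i) \<ge> 0}"
  proof (rule card_eigenvalues_ge[OF S])
    show "1\<^sub>m n \<in> carrier_mat n n" by simp
    fix x :: "real vec" assume x: "x \<in> carrier_vec n" "x \<noteq> 0\<^sub>v n"
    have "0 \<le> 2 * (x \<bullet> (graph_laplacian n (path_clique_adj a b) *\<^sub>v x))"
      by (subst graph_laplacian_quadratic_form[OF _ _ x(1)])
        (auto simp: path_clique_adj_def intro!: sum_nonneg)
    then show "1\<^sub>m n *\<^sub>v x \<noteq> 0\<^sub>v n \<and> 0 * ((1\<^sub>m n *\<^sub>v x) \<bullet> (1\<^sub>m n *\<^sub>v x))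
        \<le> (1\<^sub>m n *\<^sub>v x) \<bullet> (graph_laplacian n (path_clique_adj a b) *\<^sub>v (1\<^sub>m n *\<^sub>v x))"
      using x by simp
  qed
  from card_ge_imp_all[OF this assms] show ?thesis by simp
qed

lemma path_clique_card_eigenvalues_le_4:
  "n + a - b \<le> card {i. i < n \<and> D $$ (i,i) \<le> 4}"
proof -
  let ?L = "graph_laplacian n (path_clique_adj a b)"
  define d where "d = n + a - b"
  define \<phi> where "\<phi> k = (if k < a then k else if k \<le> b then a else k + a - b)" for k
  \<comment> \<open>the range of W consists of the vectors that are constant on the clique\<close>
  define W :: "real mat" where "W = mat n d (\<lambda>(k, j). of_bool (\<phi> k = j))"
  have "d \<le> card {i. i < n \<and> D $$ (i,i) \<le> 4}"
  proof (rule card_eigenvalues_le[OF S])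
    show "W \<in> carrier_mat n d" by (simp add: W_def)
    fix c :: "real vec" assume c: "c \<in> carrier_vec d" "c \<noteq> 0\<^sub>v d"
    define x where "x = W *\<^sub>v c"
    have x: "x \<in> carrier_vec n"
      unfolding x_def W_def by (rule mult_mat_vec_carrier) (use c in auto)
    have xk: "x $ k = c $ \<phi> k" if "k < n" for k
    proof -
      have "\<phi> k < d" using that ab by (auto simp: \<phi>_def d_def)
      then show ?thesis
        using mult_mat_vec_selection[of c d k n "\<lambda>_. True" \<phi>] c that by (simp add: x_def W_def)
    qed
    obtain j where j: "j < d" "c $ j \<noteq> 0" using nonzero_vecE[OF c] .
    define k where "k = (if j < a then j else j + b - a)"
    have k: "k < n" "\<phi> k = j" using j ab by (auto simp: k_def \<phi>_def d_def)
    then have "x $ k \<noteq> 0" using xk j(2) by simp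
    then have "x \<noteq> 0\<^sub>v n" using k(1) by auto
    moreover have "x \<bullet> (?L *\<^sub>v x) \<le> 4 * (x \<bullet> x)"
    proof -
      have "x $ k = c $ a" if "k \<in> {a..b}" for k using that ab xk[of k] by (auto simp: \<phi>_def)
      then have "real (Suc b - a) * (\<Sum>k\<in>{a..b}. (x $ k)\<^sup>2) = (\<Sum>k\<in>{a..b}. x $ k)\<^sup>2"
        by (simp add: power2_eq_square)
      then have "x \<bullet> (?L *\<^sub>v x) = path_energy n a b x"
        using path_clique_quadratic_form[OF ab(2) x] by simp
      also have "\<dots> \<le> (\<Sum>k<n. (2 * of_bool (k \<notin> {a..<b}) + 2 * of_bool (k \<notin> {a<..b})) * (x $ k)\<^sup>2)"
        by (rule path_energy_le)
      also have "\<dots> \<le> 4 * (x \<bullet> x)"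
        by (rule sum_weighted_squares_le[OF x]) auto
      finally show ?thesis .
    qed
    ultimately show "W *\<^sub>v c \<noteq> 0\<^sub>v n \<and> (W *\<^sub>v c) \<bullet> (?L *\<^sub>v (W *\<^sub>v c)) \<le> 4 * ((W *\<^sub>v c) \<bullet> (W *\<^sub>v c))"
      by (simp add: x_def)
  qed
  then show ?thesis by (simp add: d_def)
qed

lemma path_clique_card_eigenvalues_le_clique_size:
  assumes "4 \<le> Suc b - a"
  shows "n - 2 \<le> card {i. i < n \<and> D $$ (i,i) \<le> real (Suc b - a)}"
proof (rule card_eigenvalues_le[OF S])
  let ?L = "graph_laplacian n (path_clique_adj a b)"
  define Q where "Q k \<longleftrightarrow> k \<noteq> a \<and> k \<noteq> b" for k
  define \<phi> where "\<phi> k = (if k < a then k else if k < b then k - 1 else k - 2)" for k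
  \<comment> \<open>the range of W consists of the vectors vanishing at a and b\<close>
  define W :: "real mat" where "W = mat n (n - 2) (\<lambda>(k, j). of_bool (Q k \<and> \<phi> k = j))"
  show "W \<in> carrier_mat n (n - 2)" by (simp add: W_def)
  fix c :: "real vec" assume c: "c \<in> carrier_vec (n - 2)" "c \<noteq> 0\<^sub>v (n - 2)"
  define x where "x = W *\<^sub>v c"
  have x: "x \<in> carrier_vec n"
      unfolding x_def W_def by (rule mult_mat_vec_carrier) (use c in auto)
  have xk: "x $ k = (if Q k then c $ \<phi> k else 0)" if "k < n" for k
    unfolding x_def W_def
    by (rule mult_mat_vec_selection[OF c(1) that]) (use that ab in \<open>auto simp: \<phi>_def Q_def\<close>)
  obtain j where j: "j < n - 2" "c $ j \<noteq> 0" using nonzero_vecE[OF c] .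
  define k where "k = (if j < a then j else if j + 1 < b then j + 1 else j + 2)"
  have k: "k < n" "Q k" "\<phi> k = j" using j ab by (auto simp: k_def \<phi>_def Q_def)
  then have "x $ k \<noteq> 0" using xk j(2) by simp
  then have "x \<noteq> 0\<^sub>v n" using k(1) by auto
  moreover have "x \<bullet> (?L *\<^sub>v x) \<le> real (Suc b - a) * (x \<bullet> x)"
  proof -
    have "x \<bullet> (?L *\<^sub>v x) \<le>
        (\<Sum>k<n. (real (Suc b - a) * of_bool (k \<in> {a..b}) + 2 * of_bool (k \<notin> {a..<b})
          + 2 * of_bool (k \<notin> {a<..b})) * (x $ k)\<^sup>2)"
      using path_clique_quadratic_form_le[OF ab(2) x, where a = a] by (smt (verit) zero_le_power2)
    also have "\<dots> \<le> real (Suc b - a) * (x \<bullet> x)"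
      by (rule sum_weighted_squares_le[OF x]) (use xk assms in \<open>auto simp: Q_def\<close>)
    finally show ?thesis .
  qed
  ultimately show "W *\<^sub>v c \<noteq> 0\<^sub>v n \<and>
      (W *\<^sub>v c) \<bullet> (?L *\<^sub>v (W *\<^sub>v c)) \<le> real (Suc b - a) * ((W *\<^sub>v c) \<bullet> (W *\<^sub>v c))"
    by (simp add: x_def)
qed

lemma path_clique_card_eigenvalues_ge_clique_size:
  "b - a \<le> card {i. i < n \<and> D $$ (i,i) \<ge> real (Suc b - a)}"
proof (rule card_eigenvalues_ge[OF S])
  let ?L = "graph_laplacian n (path_clique_adj a b)"
  \<comment> \<open>the range of this matrix consists of the zero-sum vectors supported on the clique\<close>
  define w :: "nat \<times> nat \<Rightarrow> real" where "w = (\<lambda>(k, j). of_bool (k = a + j) - of_bool (k = b))"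
  show "mat n (b - a) w \<in> carrier_mat n (b - a)" by simp
  fix c :: "real vec" assume c: "c \<in> carrier_vec (b - a)" "c \<noteq> 0\<^sub>v (b - a)"
  define x where "x = mat n (b - a) w *\<^sub>v c"
  have x: "x \<in> carrier_vec n"
    unfolding x_def by (rule mult_mat_vec_carrier) (use c in auto)
  have xk: "x $ k = (\<Sum>j<b - a. w (k, j) * c $ j)" if "k < n" for k
    unfolding x_def by (rule mult_mat_vec_index[OF c(1) that])
  have K: "{a..b} \<subseteq> {..<n}" using ab by auto
  have supp: "x $ k = 0" if "k < n" "k \<notin> {a..b}" for k
    unfolding xk[OF that(1)] using that by (intro sum.neutral) (auto simp: w_def)
  have "(\<Sum>k\<in>{a..b}. w (k, j)) = 0" if "j < b - a" for j
    using that by (auto simp: w_def sum_subtractf of_bool_def)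
  then have sum0: "(\<Sum>k\<in>{a..b}. x $ k) = 0"
    unfolding x_def by (rule sum_mult_mat_vec_column_sums_zero[OF c(1) K])
  obtain j where j: "j < b - a" "c $ j \<noteq> 0" using nonzero_vecE[OF c] .
  have "x $ (a + j) = (\<Sum>i<b - a. if i = j then c $ i else 0)"
    using j ab by (auto simp: xk w_def intro!: sum.cong)
  also have "\<dots> = c $ j" using j(1) by simp
  finally have "x \<noteq> 0\<^sub>v n" using j ab by auto
  moreover have "real (Suc b - a) * (x \<bullet> x) \<le> x \<bullet> (?L *\<^sub>v x)"
    using path_clique_quadratic_form_clique_supported[OF ab(2) x supp sum0] path_energy_nonneg
    by simp
  ultimately show "mat n (b - a) w *\<^sub>v c \<noteq> 0\<^sub>v n \<and>
      real (Suc b - a) * ((mat n (b - a) w *\<^sub>v c) \<bullet> (mat n (b - a) w *\<^sub>v c))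
        \<le> (mat n (b - a) w *\<^sub>v c) \<bullet> (?L *\<^sub>v (mat n (b - a) w *\<^sub>v c))"
    by (simp add: x_def)
qed

lemma path_clique_card_eigenvalues_gt_clique_size:
  assumes a: "1 \<le> a" "Suc a < b" and b: "Suc b < n"
  shows "2 \<le> card {i. i < n \<and> D $$ (i,i) > real (Suc b - a)}"
proof (rule card_eigenvalues_gt[OF S])
  let ?L = "graph_laplacian n (path_clique_adj a b)"
  define w :: "nat \<times> nat \<Rightarrow> real"
    where "w = (\<lambda>(k, j). of_bool (k = (if j = 0 then a else b)) - of_bool (k = Suc a))"
  show "mat n 2 w \<in> carrier_mat n 2" by simp
  fix c :: "real vec" assume c: "c \<in> carrier_vec 2" "c \<noteq> 0\<^sub>v 2"
  define x where "x = mat n 2 w *\<^sub>v c"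
  have x: "x \<in> carrier_vec n"
    unfolding x_def by (rule mult_mat_vec_carrier) (use c in auto)
  have xk: "x $ k = w (k, 0) * c $ 0 + w (k, 1) * c $ 1" if "k < n" for k
    unfolding x_def mult_mat_vec_index[OF c(1) that] by (simp add: numeral_2_eq_2)
  have K: "{a..b} \<subseteq> {..<n}" using b by auto
  have supp: "x $ k = 0" if "k < n" "k \<notin> {a..b}" for k
    using that a by (auto simp: xk w_def)
  have "(\<Sum>k\<in>{a..b}. w (k, j)) = 0" if "j < 2" for j
    using that a by (auto simp: w_def sum_subtractf of_bool_def)
  then have sum0: "(\<Sum>k\<in>{a..b}. x $ k) = 0"
    unfolding x_def by (rule sum_mult_mat_vec_column_sums_zero[OF c(1) K])
  obtain a0 where a0: "a = Suc a0" using a(1) by (cases a) auto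
  have x_at: "x $ a0 = 0" "x $ Suc a0 = c $ 0" "x $ b = c $ 1" "x $ Suc b = 0"
    using a b a0 by (auto simp: xk w_def)
  have "a0 \<in> {..<n - 1} - {a..<b}" "b \<in> {..<n - 1} - {a..<b}" "a0 \<noteq> b"
    using a b a0 by auto
  from path_energy_ge_two_edges[OF this, of x]
  have "(c $ 0)\<^sup>2 + (c $ 1)\<^sup>2 \<le> path_energy n a b x"
    by (simp add: x_at)
  moreover have "0 < (c $ 0)\<^sup>2 + (c $ 1)\<^sup>2"
  proof -
    obtain j where "j < 2" "c $ j \<noteq> 0" using nonzero_vecE[OF c] .
    then have "c $ 0 \<noteq> 0 \<or> c $ 1 \<noteq> 0" by (auto simp: less_2_cases_iff)
    then show ?thesis by (auto simp: add_pos_nonneg add_nonneg_pos)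
  qed
  ultimately have "real (Suc b - a) * (x \<bullet> x) < x \<bullet> (?L *\<^sub>v x)"
    using path_clique_quadratic_form_clique_supported[OF _ x supp sum0] b by simp
  then show "real (Suc b - a) * ((mat n 2 w *\<^sub>v c) \<bullet> (mat n 2 w *\<^sub>v c))
      < (mat n 2 w *\<^sub>v c) \<bullet> (?L *\<^sub>v (mat n 2 w *\<^sub>v c))"
    by (simp add: x_def)
qed

lemma path_clique_spectrum:
  assumes a: "1 \<le> a" "Suc a < b" and b: "Suc b < n" and clique: "4 < Suc b - a"
  shows "\<exists>l1 l2 M. mset (diag_mat D) =
      replicate_mset (Suc b - a - 3) (real (Suc b - a)) + {#l1, l2#} + M \<and>
      real (Suc b - a) < l1 \<and> l1 \<le> real (Suc b - a) + 2 \<and>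
      real (Suc b - a) < l2 \<and> l2 \<le> real (Suc b - a) + 2 \<and>
      (\<forall>x\<in>#M. 0 \<le> x \<and> x \<le> 4)"
proof -
  let ?m = "real (Suc b - a)" and ?E = "mset (diag_mat D)"
  have D: "D \<in> carrier_mat n n" using S unfolding spectral_decomposition_def by simp
  then have size_E: "size ?E = n" by (simp add: diag_mat_def)
  have range: "0 \<le> x \<and> x \<le> ?m + 2" if "x \<in># ?E" for x
    using that D path_clique_eigenvalue_nonneg path_clique_eigenvalue_le
    by (auto simp: diag_mat_def)
  have "?E = replicate_mset (Suc b - a - 3) ?m + {#x \<in># ?E. ?m < x#} + {#x \<in># ?E. x \<le> 4#}"
    and "size {#x \<in># ?E. ?m < x#} = 2"
    using mset_decomposition_from_counts[where E = ?E and s = 4 and t = ?m and k = "Suc b - a - 3"]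
      path_clique_card_eigenvalues_le_clique_size path_clique_card_eigenvalues_gt_clique_size[OF a b]
      path_clique_card_eigenvalues_ge_clique_size path_clique_card_eigenvalues_le_4
      clique a b
    unfolding size_E size_filter_mset_diag_mat[OF D] by auto
  moreover obtain l1 l2 where B: "{#x \<in># ?E. ?m < x#} = {#l1, l2#}"
  proof -
    obtain l1 N where l1: "{#x \<in># ?E. ?m < x#} = add_mset l1 N"
      using size_eq_Suc_imp_eq_union[of "{#x \<in># ?E. ?m < x#}" 1] \<open>size {#x \<in># ?E. ?m < x#} = 2\<close>
      by auto
    then have "size N = 1" using \<open>size {#x \<in># ?E. ?m < x#} = 2\<close> by simp
    then obtain l2 where "N = {#l2#}" using size_1_singleton_mset by blast
    with l1 show thesis using that by simp
  qed
  moreover have "l1 \<in># ?E" "l2 \<in># ?E" "?m < l1" "?m < l2"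
    using arg_cong[OF B, of set_mset] by auto
  ultimately show ?thesis using range by (intro exI[of _ l1] exI[of _ l2]) fastforce
qed

end

section \<open>The graph C_q1 (+) K_p (+) C_q2\<close>

lemma ex_consecutive_pair_iff:
  "(\<exists>j::int. lo \<le> j \<and> j \<le> hi \<and> {u, v} = {j, j + 1}) \<longleftrightarrow>
    (v = u + 1 \<and> lo \<le> u \<and> u \<le> hi) \<or> (u = v + 1 \<and> lo \<le> v \<and> v \<le> hi)"
  by (auto simp: doubleton_eq_iff)

lemma ckc_adj_iff:
  "ckc_adj p q1 q2 u v \<longleftrightarrow> u \<in> ckc_vertices p q1 q2 \<and> v \<in> ckc_vertices p q1 q2 \<and> u \<noteq> v \<and>
    (u \<in> {- int p + 1..0} \<and> v \<in> {- int p + 1..0} \<or> v = u + 1 \<or> u = v + 1)"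
proof -
  have succ: "ckc_adj p q1 q2 u (u + 1) \<and> ckc_adj p q1 q2 (u + 1) u"
    if "u \<in> ckc_vertices p q1 q2" "u + 1 \<in> ckc_vertices p q1 q2" for u
  proof -
    consider "u \<le> - int p - 1" | "u = - int p" | "u \<in> {- int p + 1..-1}" | "u = 0" | "1 \<le> u"
      by force
    then show ?thesis
      using that unfolding ckc_adj_def ex_consecutive_pair_iff ckc_vertices_def
      by cases (auto simp: insert_commute)
  qed
  show ?thesis
  proof
    assume "ckc_adj p q1 q2 u v"
    then show "u \<in> ckc_vertices p q1 q2 \<and> v \<in> ckc_vertices p q1 q2 \<and> u \<noteq> v \<and>
      (u \<in> {- int p + 1..0} \<and> v \<in> {- int p + 1..0} \<or> v = u + 1 \<or> u = v + 1)"
      unfolding ckc_adj_def ex_consecutive_pair_iff by (auto simp: doubleton_eq_iff)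
  next
    assume uv: "u \<in> ckc_vertices p q1 q2 \<and> v \<in> ckc_vertices p q1 q2 \<and> u \<noteq> v \<and>
      (u \<in> {- int p + 1..0} \<and> v \<in> {- int p + 1..0} \<or> v = u + 1 \<or> u = v + 1)"
    then consider "u \<in> {- int p + 1..0} \<and> v \<in> {- int p + 1..0}" | "v = u + 1" | "u = v + 1"
      by blast
    then show "ckc_adj p q1 q2 u v"
    proof cases
      case 1
      then show ?thesis using uv unfolding ckc_adj_def by blast
    next
      case 2
      then show ?thesis using uv succ[of u] by simp
    next
      case 3
      then show ?thesis using uv succ[of v] by simp
    qed
  qed
qed

lemma ckc_vertices_eq_image:
  assumes "1 \<le> q1" "1 \<le> p"
  shows "ckc_vertices p q1 q2 = ckc_vertex p q1 q2 ` {..<ckc_n p q1 q2}"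
proof
  show "ckc_vertex p q1 q2 ` {..<ckc_n p q1 q2} \<subseteq> ckc_vertices p q1 q2"
    using assms by (auto simp: ckc_vertex_def ckc_vertices_def ckc_n_def)
  show "ckc_vertices p q1 q2 \<subseteq> ckc_vertex p q1 q2 ` {..<ckc_n p q1 q2}"
  proof
    fix v assume v: "v \<in> ckc_vertices p q1 q2"
    then have "v = ckc_vertex p q1 q2 (nat (v + int q1 + int p - 2))"
      "nat (v + int q1 + int p - 2) < ckc_n p q1 q2"
      using assms by (auto simp: ckc_vertex_def ckc_vertices_def ckc_n_def)
    then show "v \<in> ckc_vertex p q1 q2 ` {..<ckc_n p q1 q2}" by blast
  qed
qed

text \<open>Index i is the vertex i - q1 - p + 2, so the clique {-p+1..0} is the index interval
  {q1-1..q1+p-2}.\<close>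

lemma ckc_adj_vertex_iff:
  assumes "1 \<le> q1" "1 \<le> p" "i < ckc_n p q1 q2" "j < ckc_n p q1 q2"
  shows "ckc_adj p q1 q2 (ckc_vertex p q1 q2 i) (ckc_vertex p q1 q2 j) \<longleftrightarrow>
    path_clique_adj (q1 - 1) (q1 + p - 2) i j"
proof -
  have "ckc_vertex p q1 q2 k \<in> ckc_vertices p q1 q2" if "k < ckc_n p q1 q2" for k
    using ckc_vertices_eq_image[OF assms(1,2)] that by blast
  moreover have "ckc_vertex p q1 q2 k \<in> {- int p + 1..0} \<longleftrightarrow> k \<in> {q1 - 1..q1 + p - 2}" for k
    using assms(1,2) by (auto simp: ckc_vertex_def)
  ultimately show ?thesis
    using assms by (auto simp: ckc_adj_iff path_clique_adj_def ckc_vertex_def)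
qed

lemma ckc_degree_vertex:
  assumes "1 \<le> q1" "1 \<le> p" "i < ckc_n p q1 q2"
  shows "ckc_degree p q1 q2 (ckc_vertex p q1 q2 i) =
    card {k. k < ckc_n p q1 q2 \<and> path_clique_adj (q1 - 1) (q1 + p - 2) i k}"
proof -
  let ?f = "ckc_vertex p q1 q2"
  have "{v \<in> ckc_vertices p q1 q2. ckc_adj p q1 q2 (?f i) v} =
      ?f ` {k. k < ckc_n p q1 q2 \<and> path_clique_adj (q1 - 1) (q1 + p - 2) i k}"
    unfolding ckc_vertices_eq_image[OF assms(1,2)] Compr_image_eq
    using ckc_adj_vertex_iff[OF assms] by auto
  moreover have "inj ?f" by (auto simp: ckc_vertex_def inj_def)
  ultimately show ?thesis
    unfolding ckc_degree_def by (simp add: card_image inj_on_subset[of ?f UNIV])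
qed

lemma ckc_laplacian_eq_graph_laplacian:
  assumes "1 \<le> q1" "1 \<le> p"
  shows "ckc_laplacian p q1 q2 =
    graph_laplacian (ckc_n p q1 q2) (path_clique_adj (q1 - 1) (q1 + p - 2))"
  by (rule eq_matI)
    (use assms in \<open>auto simp: ckc_laplacian_def graph_laplacian_def ckc_degree_vertex ckc_adj_vertex_iff\<close>)

theorem proposition15:
  fixes p q1 q2 :: nat
  assumes "p \<ge> 6" and "q1 \<ge> 2" and "q2 \<ge> 2"
  shows "\<exists>as :: real list.
           char_poly (ckc_laplacian p q1 q2) = (\<Prod>a\<leftarrow>as. [:- a, 1:]) \<and>
           (\<exists>l1 l2 M.
              mset as = replicate_mset (p - 3) (real p) + {#l1, l2#} + M \<and>
              real p < l1 \<and> l1 \<le> real p + 2 \<and>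
              real p < l2 \<and> l2 \<le> real p + 2 \<and>
              (\<forall>x\<in>#M. 0 \<le> x \<and> x \<le> 4))"
proof -
  let ?n = "ckc_n p q1 q2" and ?a = "q1 - 1" and ?b = "q1 + p - 2"
  let ?L = "graph_laplacian ?n (path_clique_adj ?a ?b)"
  have L: "ckc_laplacian p q1 q2 = ?L"
    using assms by (intro ckc_laplacian_eq_graph_laplacian) auto
  have "transpose_mat ?L = ?L"
    by (rule graph_laplacian_symmetric) (auto simp: path_clique_adj_def)
  then obtain U D where S: "spectral_decomposition ?n ?L U D"
    using spectral_theorem[OF graph_laplacian_carrier] by blast
  have clique_size: "Suc ?b - ?a = p" using assms by simp
  have "?a < ?b" "?b < ?n" "1 \<le> ?a" "Suc ?a < ?b" "Suc ?b < ?n" "4 < Suc ?b - ?a"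
    using assms by (auto simp: ckc_n_def)
  from path_clique_spectrum[OF this(1,2) S this(3-)]
  show ?thesis
    unfolding L clique_size using spectral_decomposition_char_poly[OF S] by blast
qed

end
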